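(* Let $E$ be a complex vector space of dimension $n$ with coordinates $(z_1,\dots,z_n)$ and $\omega=\sum_{j=1}^n i\,dz_j\wedge d\bar z_j$. Let $p,q$ be integers with $q\ge2$ and $p+q\le n$, and let $\alpha\in V^{p,q-1}$. Assume that for every $\varphi\in V^{0,1}$ there exists $\beta\in V^{p-1,q-1}$ with $\alpha\wedge\varphi=\omega\wedge\beta$. Then there exists $\gamma\in V^{p-1,q-2}$ with $\alpha=\omega\wedge\gamma$.
   Context: $V^{p,q}:=\bigwedge^pE\otimes\bigwedge^q\overline E$ is the space of $(p,q)$-forms on $E$, with $V^{p,q}:=0$ unless $0\le p,q\le n$. *)

theory Defs
  imports Complex_Main
begin

text \<open>Exterior algebra of E = C^n (real dimension 2n) over C, with the ordered basis
 dz_1,...,dz_n, dzbar_1,...,dzbar_n indexed by 0..n-1 and n..2n-1.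
 A form is represented by its coefficients on the basis monomials e_S (S a finite
 set of generator indices, listed in increasing order).\<close>

type_synonym form = "nat set \<Rightarrow> complex"

definition wsign :: "nat set \<Rightarrow> nat set \<Rightarrow> complex" where
  "wsign S T = (-1) ^ card {(s, t). s \<in> S \<and> t \<in> T \<and> t < s}"

text \<open>e_S \<and> e_T = wsign S T e_(S \<union> T) for disjoint S, T, and 0 otherwise.\<close>
definition wedge :: "form \<Rightarrow> form \<Rightarrow> form" (infixl "\<and>\<^sub>w" 70) where
  "wedge \<alpha> \<beta> U = (\<Sum>S\<in>Pow U. wsign S (U - S) * \<alpha> S * \<beta> (U - S))"

text \<open>V^{p,q}: (p,q)-forms; equal to {0} unless 0 \<le> p, q \<le> n.\<close>
definition V :: "nat \<Rightarrow> int \<Rightarrow> int \<Rightarrow> form set" where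
  "V n p q = {f. \<forall>S. f S \<noteq> 0 \<longrightarrow>
      S \<subseteq> {..<2*n} \<and> int (card (S \<inter> {..<n})) = p \<and> int (card (S \<inter> {n..<2*n})) = q}"

definition omega :: "nat \<Rightarrow> form" where
  "omega n U = (if \<exists>j<n. U = {j, n + j} then \<i> else 0)"

end

theory Submission
  imports Defs
begin

(* The proof:
   1. Testing the hypothesis with phi = dzbar_j and contracting by dzbar_j gives a form E_j with
      alpha = omega /\ E_j on all monomials avoiding the pair j (a local primitive).
   2. For j /= k, E_j and E_k agree on the (p-1, q-2)-monomials avoiding both pairs: their
      difference is annihilated by the Lefschetz operator of the remaining n - 2 pairs, which is
      injective below the middle degree by the norm identity
      |L h|^2 = |Lambda h|^2 + sum_R (|M| - |R|) |h R|^2.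
   3. The local primitives therefore glue to a global primitive gamma. *)

section \<open>Signs of products of basis monomials\<close>

lemma finite_inversions: "finite A \<Longrightarrow> finite {(s, t). s \<in> A \<and> t \<in> C \<and> t < (s::nat)}"
  by (rule finite_subset[of _ "SIGMA s:A. {..<s}"]) auto

lemma wsign_squared: "wsign A B * wsign A B = 1"
  unfolding wsign_def by (simp flip: power_mult_distrib)

lemma cnj_wsign [simp]: "cnj (wsign A B) = wsign A B"
  unfolding wsign_def by simp

lemma wsign_Un_left:
  assumes "finite A" "finite B" "A \<inter> B = {}"
  shows "wsign (A \<union> B) C = wsign A C * wsign B C"
proof -
  have e: "{(s, t). s \<in> A \<union> B \<and> t \<in> C \<and> t < s} =
     {(s, t). s \<in> A \<and> t \<in> C \<and> t < s} \<union> {(s, t). s \<in> B \<and> t \<in> C \<and> t < (s::nat)}" by auto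
  have "card {(s, t). s \<in> A \<union> B \<and> t \<in> C \<and> t < s} =
     card {(s, t). s \<in> A \<and> t \<in> C \<and> t < s} + card {(s, t). s \<in> B \<and> t \<in> C \<and> t < (s::nat)}"
    unfolding e by (rule card_Un_disjoint) (use assms finite_inversions in auto)
  then show ?thesis unfolding wsign_def by (simp add: power_add)
qed

lemma wsign_Un_right:
  assumes "finite A" "B \<inter> C = {}"
  shows "wsign A (B \<union> C) = wsign A B * wsign A C"
proof -
  have e: "{(s, t). s \<in> A \<and> t \<in> B \<union> C \<and> t < s} =
     {(s, t). s \<in> A \<and> t \<in> B \<and> t < s} \<union> {(s, t). s \<in> A \<and> t \<in> C \<and> t < (s::nat)}" by auto
  have "card {(s, t). s \<in> A \<and> t \<in> B \<union> C \<and> t < s} =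
     card {(s, t). s \<in> A \<and> t \<in> B \<and> t < s} + card {(s, t). s \<in> A \<and> t \<in> C \<and> t < (s::nat)}"
    unfolding e by (rule card_Un_disjoint) (use assms finite_inversions in auto)
  then show ?thesis unfolding wsign_def by (simp add: power_add)
qed

lemma wsign_commute:
  assumes "finite A" "finite B" "A \<inter> B = {}"
  shows "wsign A B * wsign B A = (-1) ^ (card A * card B)"
proof -
  let ?P1 = "{(s, t). s \<in> A \<and> t \<in> B \<and> t < (s::nat)}"
  let ?P2 = "{(s, t). s \<in> B \<and> t \<in> A \<and> t < (s::nat)}"
  let ?P2' = "{(s, t). s \<in> A \<and> t \<in> B \<and> s < t}"
  have "prod.swap ` ?P2 = ?P2'" by auto
  moreover have "card (prod.swap ` ?P2) = card ?P2" by (rule card_image) auto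
  moreover have "?P1 \<union> ?P2' = A \<times> B"
    using assms(3) by (auto simp: linorder_neq_iff)
  moreover have "card (?P1 \<union> ?P2') = card ?P1 + card ?P2'"
    by (rule card_Un_disjoint) (use assms in \<open>auto intro: finite_subset[of _ "A \<times> B"]\<close>)
  ultimately have "card ?P1 + card ?P2 = card A * card B" by (simp add: card_cartesian_product)
  then show ?thesis unfolding wsign_def by (simp add: power_add[symmetric])
qed

section \<open>Coordinate pairs and bidegrees\<close>

(* The support {k, n + k} of the 2-form dz_k /\ dzbar_k, and the union of such supports over a
   set M of coordinates; forms supported in pair_block n M live on the coordinates in M. *)
definition pair :: "nat \<Rightarrow> nat \<Rightarrow> nat set" where
  "pair n k = {k, n + k}"

definition pair_block :: "nat \<Rightarrow> nat set \<Rightarrow> nat set" where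
  "pair_block n M = (\<Union>k\<in>M. pair n k)"

lemma finite_pair [simp]: "finite (pair n k)"
  by (simp add: pair_def)

lemma pair_disjoint: "k < n \<Longrightarrow> l < n \<Longrightarrow> k \<noteq> l \<Longrightarrow> pair n k \<inter> pair n l = {}"
  by (auto simp: pair_def)

lemma finite_pair_block: "finite M \<Longrightarrow> finite (pair_block n M)"
  by (simp add: pair_block_def)

lemma pair_subset_block: "k \<in> M \<Longrightarrow> pair n k \<subseteq> pair_block n M"
  by (auto simp: pair_block_def)

lemma pair_subset_blockD: "pair n l \<subseteq> pair_block n M \<Longrightarrow> M \<subseteq> {..<n} \<Longrightarrow> l < n \<Longrightarrow> l \<in> M"
  by (auto simp: pair_block_def pair_def)

lemma pair_block_lessThan: "pair_block n {..<n} = {..<2*n}"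
proof -
  have "x \<in> pair_block n {..<n}" if "x < 2*n" for x
    using that by (cases "x < n") (auto simp: pair_block_def pair_def intro!: bexI[of _ "x - n"])
  then show ?thesis by (auto simp: pair_block_def pair_def)
qed

lemma pair_block_disjoint:
  assumes "j < n" "M \<subseteq> {..<n}" "j \<notin> M"
  shows "pair n j \<inter> pair_block n M = {}"
  using assms pair_disjoint by (fastforce simp: pair_block_def)

lemma subset_block_avoiding:
  assumes "S \<subseteq> {..<2*n}" "\<forall>j\<in>J. pair n j \<inter> S = {}"
  shows "S \<subseteq> pair_block n ({..<n} - J)"
proof
  fix x assume x: "x \<in> S"
  then have "x \<in> pair_block n {..<n}" using assms(1) by (auto simp: pair_block_lessThan)
  then obtain m where m: "m < n" "x \<in> pair n m" by (auto simp: pair_block_def)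
  moreover have "m \<notin> J" using m x assms(2) by blast
  ultimately show "x \<in> pair_block n ({..<n} - J)" by (auto simp: pair_block_def)
qed

lemma wsign_pairs_commute:
  assumes "k < n" "l < n" "k \<noteq> l"
  shows "wsign (pair n k) (pair n l) * wsign (pair n l) (pair n k) = 1"
  using wsign_commute[of "pair n k" "pair n l"] pair_disjoint[OF assms] assms
  by (simp add: pair_def)

lemma card_by_pairs:
  assumes "finite M" "M \<subseteq> {..<n}" "R \<subseteq> pair_block n M"
  shows "card R = (\<Sum>k\<in>M. card (R \<inter> pair n k))"
proof -
  have "R = (\<Union>k\<in>M. R \<inter> pair n k)" using assms(3) by (auto simp: pair_block_def)
  also have "card \<dots> = (\<Sum>k\<in>M. card (R \<inter> pair n k))"
    by (rule card_UN_disjoint) (use assms(1,2) in \<open>auto simp: pair_def\<close>)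
  finally show ?thesis .
qed

definition bideg :: "nat \<Rightarrow> int \<Rightarrow> int \<Rightarrow> nat set \<Rightarrow> bool" where
  "bideg n a b S \<longleftrightarrow>
     S \<subseteq> {..<2*n} \<and> int (card (S \<inter> {..<n})) = a \<and> int (card (S \<inter> {n..<2*n})) = b"

lemma V_iff_bideg: "f \<in> V n a b \<longleftrightarrow> (\<forall>S. f S \<noteq> 0 \<longrightarrow> bideg n a b S)"
  by (simp add: V_def bideg_def)

lemma card_bideg:
  assumes "bideg n a b S"
  shows "int (card S) = a + b"
proof -
  have "S = (S \<inter> {..<n}) \<union> (S \<inter> {n..<2*n})" using assms by (auto simp: bideg_def)
  then have "card S = card (S \<inter> {..<n}) + card (S \<inter> {n..<2*n})"
    using card_Un_disjoint[of "S \<inter> {..<n}" "S \<inter> {n..<2*n}"] by (simp add: disjoint_iff)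
  then show ?thesis using assms by (simp add: bideg_def)
qed

lemma bideg_minus_pair:
  assumes "k < n" "pair n k \<subseteq> T"
  shows "bideg n (a - 1) (b - 1) (T - pair n k) \<longleftrightarrow> bideg n a b T"
proof -
  have holo: "(T - pair n k) \<inter> {..<n} = (T \<inter> {..<n}) - {k}" "k \<in> T \<inter> {..<n}"
    using assms by (auto simp: pair_def)
  have anti: "(T - pair n k) \<inter> {n..<2*n} = (T \<inter> {n..<2*n}) - {n + k}" "n + k \<in> T \<inter> {n..<2*n}"
    using assms by (auto simp: pair_def)
  have "card (T \<inter> {..<n}) = Suc (card ((T - pair n k) \<inter> {..<n}))"
    unfolding holo(1) by (rule card_Suc_Diff1[symmetric]) (use holo(2) in auto)
  moreover have "card (T \<inter> {n..<2*n}) = Suc (card ((T - pair n k) \<inter> {n..<2*n}))"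
    unfolding anti(1) by (rule card_Suc_Diff1[symmetric]) (use anti(2) in auto)
  moreover have "T - pair n k \<subseteq> {..<2*n} \<longleftrightarrow> T \<subseteq> {..<2*n}"
    using assms by (auto simp: pair_def)
  ultimately show ?thesis unfolding bideg_def by auto
qed

lemma exists_free_pair:
  assumes "S \<subseteq> {..<2*n}" "card S < n"
  shows "\<exists>j<n. pair n j \<inter> S = {}"
proof (rule ccontr)
  assume "\<not> ?thesis"
  then have "\<forall>j\<in>{..<n}. 1 \<le> card (S \<inter> pair n j)"
    by (auto simp: Suc_le_eq card_gt_0_iff Int_commute)
  then have "n \<le> (\<Sum>j<n. card (S \<inter> pair n j))"
    using sum_mono[of "{..<n}" "\<lambda>_. 1::nat"] by simp
  also have "\<dots> = card S"
    by (rule card_by_pairs[symmetric]) (use assms(1) in \<open>simp_all add: pair_block_lessThan\<close>)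
  finally show False using assms(2) by simp
qed

section \<open>The Lefschetz operator of a block of coordinates\<close>

(* The Lefschetz operator of the block M: lef n M h = (omega_M /\ h) / i with
   omega_M = sum_{k in M} i dz_k /\ dzbar_k, and its adjoint lef_adj n M (contraction by omega_M)
   with respect to the standard Hermitian inner product on coefficients. *)
definition lef_term :: "nat \<Rightarrow> form \<Rightarrow> nat \<Rightarrow> nat set \<Rightarrow> complex" where
  "lef_term n h k T = wsign (pair n k) (T - pair n k) * h (T - pair n k)"

definition lef :: "nat \<Rightarrow> nat set \<Rightarrow> form \<Rightarrow> form" where
  "lef n M h T = (\<Sum>k\<in>{k\<in>M. pair n k \<subseteq> T}. lef_term n h k T)"

definition adj_term :: "nat \<Rightarrow> form \<Rightarrow> nat \<Rightarrow> nat set \<Rightarrow> complex" where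
  "adj_term n h k R = wsign (pair n k) R * h (R \<union> pair n k)"

definition lef_adj :: "nat \<Rightarrow> nat set \<Rightarrow> form \<Rightarrow> form" where
  "lef_adj n M h R = (\<Sum>k\<in>{k\<in>M. pair n k \<inter> R = {}}. adj_term n h k R)"

lemma lef_cong:
  assumes "\<And>k. k \<in> M \<Longrightarrow> pair n k \<subseteq> T \<Longrightarrow> h (T - pair n k) = g (T - pair n k)"
  shows "lef n M h T = lef n M g T"
  unfolding lef_def lef_term_def using assms by (intro sum.cong) auto

lemma lef_diff: "lef n M (\<lambda>S. f S - g S) T = lef n M f T - lef n M g T"
  unfolding lef_def lef_term_def by (simp add: sum_subtractf right_diff_distrib)

lemma lef_restrict_block:
  assumes "M \<subseteq> {..<n}" "T \<subseteq> pair_block n M"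
  shows "lef n {..<n} h T = lef n M h T"
proof -
  have "{k\<in>{..<n}. pair n k \<subseteq> T} = {k\<in>M. pair n k \<subseteq> T}"
    using assms pair_subset_blockD by blast
  then show ?thesis by (simp add: lef_def)
qed

lemma sum_Pow_superset:
  assumes "finite X" "B \<subseteq> X"
  shows "(\<Sum>T\<in>Pow X. if B \<subseteq> T then g T else 0) = (\<Sum>R\<in>Pow (X - B). g (R \<union> B))"
proof -
  have "(\<Sum>T\<in>Pow X. if B \<subseteq> T then g T else 0) = (\<Sum>T\<in>{T\<in>Pow X. B \<subseteq> T}. g T)"
    by (subst sum.inter_filter) (use assms(1) in simp_all)
  also have "\<dots> = (\<Sum>R\<in>Pow (X - B). g (R \<union> B))"
    by (rule sum.reindex_bij_witness[where j="\<lambda>T. T - B" and i="\<lambda>R. R \<union> B"])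
      (use assms in \<open>auto simp: Un_absorb2\<close>)
  finally show ?thesis .
qed

lemma sum_Pow_disjoint:
  assumes "finite X"
  shows "(\<Sum>R\<in>Pow X. if B \<inter> R = {} then g R else 0) = (\<Sum>R\<in>Pow (X - B). g R)"
proof -
  have "(\<Sum>R\<in>Pow X. if B \<inter> R = {} then g R else 0) = (\<Sum>R\<in>{R\<in>Pow X. B \<inter> R = {}}. g R)"
    by (subst sum.inter_filter) (use assms(1) in simp_all)
  also have "{R\<in>Pow X. B \<inter> R = {}} = Pow (X - B)" by auto
  finally show ?thesis .
qed

lemma sum_filter_times_cnj:
  assumes "finite M"
  shows "(\<Sum>k\<in>{k\<in>M. P k}. f k) * cnj (\<Sum>k\<in>{k\<in>M. P k}. f k) =
    (\<Sum>k\<in>M. \<Sum>l\<in>M. if P k \<and> P l then f k * cnj (f l) else 0)"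
  using assms by (simp add: sum.inter_filter[symmetric] sum_product)
    (auto simp: sum.inter_filter intro!: sum.cong)

lemma lef_square_expand:
  assumes "finite M"
  shows "(\<Sum>T\<in>Pow X. lef n M h T * cnj (lef n M h T)) =
    (\<Sum>k\<in>M. \<Sum>l\<in>M. \<Sum>T\<in>Pow X. if pair n k \<subseteq> T \<and> pair n l \<subseteq> T
       then lef_term n h k T * cnj (lef_term n h l T) else 0)"
proof -
  have "(\<Sum>T\<in>Pow X. lef n M h T * cnj (lef n M h T)) =
      (\<Sum>T\<in>Pow X. \<Sum>k\<in>M. \<Sum>l\<in>M. if pair n k \<subseteq> T \<and> pair n l \<subseteq> T
         then lef_term n h k T * cnj (lef_term n h l T) else 0)"
    unfolding lef_def by (rule sum.cong[OF refl], rule sum_filter_times_cnj[OF assms])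
  also have "\<dots> = (\<Sum>k\<in>M. \<Sum>T\<in>Pow X. \<Sum>l\<in>M. if pair n k \<subseteq> T \<and> pair n l \<subseteq> T
         then lef_term n h k T * cnj (lef_term n h l T) else 0)" by (rule sum.swap)
  finally show ?thesis by (simp only: sum.swap[of _ "Pow X"])
qed

lemma lef_adj_square_expand:
  assumes "finite M"
  shows "(\<Sum>R\<in>Pow X. lef_adj n M h R * cnj (lef_adj n M h R)) =
    (\<Sum>k\<in>M. \<Sum>l\<in>M. \<Sum>R\<in>Pow X. if pair n l \<inter> R = {} \<and> pair n k \<inter> R = {}
       then adj_term n h l R * cnj (adj_term n h k R) else 0)"
proof -
  have "(\<Sum>R\<in>Pow X. lef_adj n M h R * cnj (lef_adj n M h R)) =
      (\<Sum>R\<in>Pow X. \<Sum>l\<in>M. \<Sum>k\<in>M. if pair n l \<inter> R = {} \<and> pair n k \<inter> R = {}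
         then adj_term n h l R * cnj (adj_term n h k R) else 0)"
    unfolding lef_adj_def by (rule sum.cong[OF refl], rule sum_filter_times_cnj[OF assms])
  also have "\<dots> = (\<Sum>R\<in>Pow X. \<Sum>k\<in>M. \<Sum>l\<in>M. if pair n l \<inter> R = {} \<and> pair n k \<inter> R = {}
         then adj_term n h l R * cnj (adj_term n h k R) else 0)"
    by (rule sum.cong[OF refl], rule sum.swap)
  also have "\<dots> = (\<Sum>k\<in>M. \<Sum>R\<in>Pow X. \<Sum>l\<in>M. if pair n l \<inter> R = {} \<and> pair n k \<inter> R = {}
         then adj_term n h l R * cnj (adj_term n h k R) else 0)" by (rule sum.swap)
  finally show ?thesis by (simp only: sum.swap[of _ "Pow X"])
qed

(* In <L h, L h> - <Lambda h, Lambda h> the terms with k /= l cancel, since the 2-forms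
   commute ... *)
lemma lef_cross_term:
  assumes "finite X" "pair n k \<union> pair n l \<subseteq> X" "k < n" "l < n" "k \<noteq> l"
  shows "(\<Sum>T\<in>Pow X. if pair n k \<subseteq> T \<and> pair n l \<subseteq> T
             then lef_term n h k T * cnj (lef_term n h l T) else 0)
       = (\<Sum>R\<in>Pow X. if pair n l \<inter> R = {} \<and> pair n k \<inter> R = {}
             then adj_term n h l R * cnj (adj_term n h k R) else 0)"
    (is "?lhs = ?rhs")
proof -
  let ?B = "pair n k \<union> pair n l"
  have disj: "pair n k \<inter> pair n l = {}" using pair_disjoint assms(3-5) by blast
  have "?lhs = (\<Sum>T\<in>Pow X. if ?B \<subseteq> T then lef_term n h k T * cnj (lef_term n h l T) else 0)"
    by (rule sum.cong) auto
  also have "\<dots> = (\<Sum>R\<in>Pow (X - ?B). lef_term n h k (R \<union> ?B) * cnj (lef_term n h l (R \<union> ?B)))"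
    by (rule sum_Pow_superset[OF assms(1,2)])
  also have "\<dots> = (\<Sum>R\<in>Pow (X - ?B). adj_term n h l R * cnj (adj_term n h k R))"
  proof (rule sum.cong[OF refl])
    fix R assume R: "R \<in> Pow (X - ?B)"
    have "R \<union> ?B - pair n k = R \<union> pair n l" "R \<union> ?B - pair n l = R \<union> pair n k"
      using R disj by auto
    moreover have "wsign (pair n k) (R \<union> pair n l) = wsign (pair n k) R * wsign (pair n k) (pair n l)"
      "wsign (pair n l) (R \<union> pair n k) = wsign (pair n l) R * wsign (pair n l) (pair n k)"
      by (rule wsign_Un_right; use R in auto)+
    ultimately have "lef_term n h k (R \<union> ?B) * cnj (lef_term n h l (R \<union> ?B))
        = (wsign (pair n k) (pair n l) * wsign (pair n l) (pair n k)) * (adj_term n h l R * cnj (adj_term n h k R))"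
      by (simp add: lef_term_def adj_term_def mult_ac)
    then show "lef_term n h k (R \<union> ?B) * cnj (lef_term n h l (R \<union> ?B)) = adj_term n h l R * cnj (adj_term n h k R)"
      using wsign_pairs_commute[OF assms(3-5)] by simp
  qed
  also have "\<dots> = (\<Sum>R\<in>Pow X. if ?B \<inter> R = {} then adj_term n h l R * cnj (adj_term n h k R) else 0)"
    by (rule sum_Pow_disjoint[OF assms(1), symmetric])
  also have "\<dots> = ?rhs" by (rule sum.cong) auto
  finally show ?thesis .
qed

lemma lef_term_norm:
  assumes "pair n k \<inter> R = {}"
  shows "lef_term n h k (R \<union> pair n k) * cnj (lef_term n h k (R \<union> pair n k)) = h R * cnj (h R)"
proof -
  have "R \<union> pair n k - pair n k = R" using assms by auto
  then have "lef_term n h k (R \<union> pair n k) * cnj (lef_term n h k (R \<union> pair n k))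
      = (wsign (pair n k) R * wsign (pair n k) R) * (h R * cnj (h R))"
    by (simp add: lef_term_def mult_ac)
  then show ?thesis by (simp add: wsign_squared)
qed

lemma adj_term_norm:
  "adj_term n h k R * cnj (adj_term n h k R) = h (R \<union> pair n k) * cnj (h (R \<union> pair n k))"
proof -
  have "adj_term n h k R * cnj (adj_term n h k R)
      = (wsign (pair n k) R * wsign (pair n k) R) * (h (R \<union> pair n k) * cnj (h (R \<union> pair n k)))"
    by (simp add: adj_term_def mult_ac)
  then show ?thesis by (simp add: wsign_squared)
qed

lemma lef_diagonal_term:
  assumes "finite X" "pair n k \<subseteq> X"
  shows "(\<Sum>T\<in>Pow X. if pair n k \<subseteq> T then lef_term n h k T * cnj (lef_term n h k T) else 0)
       - (\<Sum>R\<in>Pow X. if pair n k \<inter> R = {} then adj_term n h k R * cnj (adj_term n h k R) else 0)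
       = (\<Sum>R\<in>Pow X. of_int ((if pair n k \<inter> R = {} then 1 else 0) - (if pair n k \<subseteq> R then 1 else 0))
             * (h R * cnj (h R)))"
proof -
  let ?v = "\<lambda>R. h R * cnj (h R)"
  have lef_part: "(\<Sum>T\<in>Pow X. if pair n k \<subseteq> T then lef_term n h k T * cnj (lef_term n h k T) else 0)
      = (\<Sum>R\<in>Pow X. if pair n k \<inter> R = {} then ?v R else 0)"
    unfolding sum_Pow_superset[OF assms] sum_Pow_disjoint[OF assms(1)]
    by (rule sum.cong[OF refl], rule lef_term_norm) auto
  have adj_part: "(\<Sum>R\<in>Pow X. if pair n k \<inter> R = {} then adj_term n h k R * cnj (adj_term n h k R) else 0)
      = (\<Sum>R\<in>Pow X. if pair n k \<subseteq> R then ?v R else 0)"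
    unfolding sum_Pow_superset[OF assms] sum_Pow_disjoint[OF assms(1)] adj_term_norm ..
  show ?thesis
    unfolding lef_part adj_part sum_subtractf[symmetric] by (intro sum.cong) auto
qed

lemma pair_count:
  assumes "finite M" "M \<subseteq> {..<n}" "R \<subseteq> pair_block n M"
  shows "(\<Sum>k\<in>M. (if pair n k \<inter> R = {} then 1 else 0) - (if pair n k \<subseteq> R then 1 else 0) :: int)
         = int (card M) - int (card R)"
proof -
  have per_pair: "(if pair n k \<inter> R = {} then 1 else 0) - (if pair n k \<subseteq> R then 1 else 0)
      = 1 - int (card (R \<inter> pair n k))" if "k \<in> M" for k
  proof -
    have "k \<noteq> n + k" using that assms(2) by auto
    then show ?thesis by (cases "k \<in> R"; cases "n + k \<in> R") (auto simp: pair_def Int_insert_right)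
  qed
  have "(\<Sum>k\<in>M. (if pair n k \<inter> R = {} then 1 else 0) - (if pair n k \<subseteq> R then 1 else 0) :: int)
      = (\<Sum>k\<in>M. 1 - int (card (R \<inter> pair n k)))"
    by (rule sum.cong) (simp_all add: per_pair)
  also have "\<dots> = int (card M) - int (card R)"
    by (simp add: sum_subtractf card_by_pairs[OF assms])
  finally show ?thesis .
qed

(* The Kaehler identity [L, Lambda] = (|M| - deg) in norm form:
   |L h|^2 = |Lambda h|^2 + sum_R (|M| - |R|) |h R|^2. *)
lemma lef_norm_identity:
  assumes "finite M" "M \<subseteq> {..<n}"
  defines "X \<equiv> pair_block n M"
  shows "(\<Sum>T\<in>Pow X. lef n M h T * cnj (lef n M h T)) =
    (\<Sum>R\<in>Pow X. lef_adj n M h R * cnj (lef_adj n M h R)) +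
    (\<Sum>R\<in>Pow X. of_int (int (card M) - int (card R)) * (h R * cnj (h R)))"
proof -
  have finX: "finite X" unfolding X_def using assms(1) by (rule finite_pair_block)
  let ?v = "\<lambda>R. h R * cnj (h R)"
  let ?ind = "\<lambda>k R. (if pair n k \<inter> R = {} then 1 else 0) - (if pair n k \<subseteq> R then 1 else 0) :: int"
  define F where "F T k l = (if pair n k \<subseteq> T \<and> pair n l \<subseteq> T
      then lef_term n h k T * cnj (lef_term n h l T) else 0)" for T k l
  define G where "G R k l = (if pair n l \<inter> R = {} \<and> pair n k \<inter> R = {}
      then adj_term n h l R * cnj (adj_term n h k R) else 0)" for R k l
  have lef_sq: "(\<Sum>T\<in>Pow X. lef n M h T * cnj (lef n M h T)) = (\<Sum>k\<in>M. \<Sum>l\<in>M. \<Sum>T\<in>Pow X. F T k l)"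
    unfolding F_def by (rule lef_square_expand[OF assms(1)])
  have adj_sq: "(\<Sum>R\<in>Pow X. lef_adj n M h R * cnj (lef_adj n M h R)) = (\<Sum>k\<in>M. \<Sum>l\<in>M. \<Sum>R\<in>Pow X. G R k l)"
    unfolding G_def by (rule lef_adj_square_expand[OF assms(1)])
  have per_pair: "(\<Sum>T\<in>Pow X. F T k l) - (\<Sum>R\<in>Pow X. G R k l)
      = (if l = k then \<Sum>R\<in>Pow X. of_int (?ind k R) * ?v R else 0)" if "k \<in> M" "l \<in> M" for k l
  proof (cases "l = k")
    case True
    then show ?thesis using lef_diagonal_term[OF finX, of n k h] that(1)
      by (simp add: F_def G_def X_def pair_subset_block)
  next
    case False
    then show ?thesis using lef_cross_term[OF finX, of n k l h] that assms(2)
      by (auto simp: F_def G_def X_def pair_subset_block)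
  qed
  have "(\<Sum>T\<in>Pow X. lef n M h T * cnj (lef n M h T)) - (\<Sum>R\<in>Pow X. lef_adj n M h R * cnj (lef_adj n M h R))
      = (\<Sum>k\<in>M. \<Sum>l\<in>M. (\<Sum>T\<in>Pow X. F T k l) - (\<Sum>R\<in>Pow X. G R k l))"
    unfolding lef_sq adj_sq by (simp add: sum_subtractf)
  also have "\<dots> = (\<Sum>k\<in>M. \<Sum>R\<in>Pow X. of_int (?ind k R) * ?v R)"
    using assms(1) by (simp add: per_pair)
  also have "\<dots> = (\<Sum>R\<in>Pow X. of_int (\<Sum>k\<in>M. ?ind k R) * ?v R)"
    by (simp add: sum.swap[of _ M] sum_distrib_right)
  also have "\<dots> = (\<Sum>R\<in>Pow X. of_int (int (card M) - int (card R)) * ?v R)"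
    by (rule sum.cong) (simp_all add: pair_count[OF assms(1,2)] X_def)
  finally show ?thesis by (simp add: algebra_simps)
qed

lemma lef_norm_identity_real:
  assumes "finite M" "M \<subseteq> {..<n}"
  shows "(\<Sum>T\<in>Pow (pair_block n M). (norm (lef n M h T))\<^sup>2) =
    (\<Sum>R\<in>Pow (pair_block n M). (norm (lef_adj n M h R))\<^sup>2) +
    (\<Sum>R\<in>Pow (pair_block n M). real_of_int (int (card M) - int (card R)) * (norm (h R))\<^sup>2)"
proof -
  have "complex_of_real (\<Sum>T\<in>Pow (pair_block n M). (norm (lef n M h T))\<^sup>2) =
    complex_of_real ((\<Sum>R\<in>Pow (pair_block n M). (norm (lef_adj n M h R))\<^sup>2) +
    (\<Sum>R\<in>Pow (pair_block n M). real_of_int (int (card M) - int (card R)) * (norm (h R))\<^sup>2))"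
    by (simp only: of_real_add of_real_sum of_real_mult of_real_of_int_eq complex_norm_square
        lef_norm_identity[OF assms])
  then show ?thesis by (simp only: of_real_eq_iff)
qed

lemma lef_injective_below_middle:
  assumes "finite M" "M \<subseteq> {..<n}"
    and lef_zero: "\<forall>T \<subseteq> pair_block n M. lef n M h T = 0"
    and low_degree: "\<forall>R \<subseteq> pair_block n M. h R \<noteq> 0 \<longrightarrow> card R < card M"
  shows "\<forall>R \<subseteq> pair_block n M. h R = 0"
proof -
  let ?X = "pair_block n M"
  define c where "c R = real_of_int (int (card M) - int (card R))" for R :: "nat set"
  have term_nonneg: "c R * (norm (h R))\<^sup>2 \<ge> 0" if "R \<in> Pow ?X" for R
  proof (cases "h R = 0")
    case False
    then have "card R < card M" using low_degree that by blast
    then show ?thesis by (simp add: c_def)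
  qed simp
  have "(\<Sum>T\<in>Pow ?X. (norm (lef n M h T))\<^sup>2) = 0"
    by (rule sum.neutral) (simp add: lef_zero)
  moreover have "(\<Sum>R\<in>Pow ?X. (norm (lef_adj n M h R))\<^sup>2) \<ge> 0" by (rule sum_nonneg) simp
  moreover have "(\<Sum>R\<in>Pow ?X. c R * (norm (h R))\<^sup>2) \<ge> 0" by (rule sum_nonneg) (rule term_nonneg)
  ultimately have "(\<Sum>R\<in>Pow ?X. c R * (norm (h R))\<^sup>2) = 0"
    using lef_norm_identity_real[OF assms(1,2), of h] unfolding c_def by linarith
  then have terms_zero: "\<forall>R\<in>Pow ?X. c R * (norm (h R))\<^sup>2 = 0"
    by (subst (asm) sum_nonneg_eq_0_iff) (simp_all add: finite_pair_block assms(1) term_nonneg)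
  show ?thesis
  proof (intro allI impI)
    fix R assume R: "R \<subseteq> ?X"
    show "h R = 0"
    proof (rule ccontr)
      assume "h R \<noteq> 0"
      moreover from this have "card R < card M" using low_degree R by blast
      moreover have "c R * (norm (h R))\<^sup>2 = 0" using terms_zero R by blast
      ultimately show False by (simp add: c_def)
    qed
  qed
qed

section \<open>Wedge products with omega and dzbar\<close>

lemma wedge_omega:
  assumes "finite U"
  shows "(omega n \<and>\<^sub>w \<beta>) U = \<i> * lef n {..<n} \<beta> U"
proof -
  let ?K = "{k\<in>{..<n}. pair n k \<subseteq> U}"
  have inj: "inj_on (pair n) ?K" by (auto simp: inj_on_def pair_def doubleton_eq_iff)
  have "(omega n \<and>\<^sub>w \<beta>) U = (\<Sum>S\<in>pair n ` ?K. wsign S (U - S) * omega n S * \<beta> (U - S))"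
    unfolding wedge_def
    by (rule sum.mono_neutral_right) (use assms in \<open>auto simp: omega_def pair_def\<close>)
  also have "\<dots> = (\<Sum>k\<in>?K. \<i> * lef_term n \<beta> k U)"
    by (subst sum.reindex[OF inj]) (auto simp: omega_def pair_def lef_term_def intro!: sum.cong)
  finally show ?thesis by (simp add: lef_def sum_distrib_left)
qed

definition dzbar :: "nat \<Rightarrow> nat \<Rightarrow> form" where
  "dzbar n j S = (if S = {n + j} then 1 else 0)"

lemma dzbar_in_V: "j < n \<Longrightarrow> dzbar n j \<in> V n 0 1"
  by (auto simp: V_def dzbar_def)

lemma wedge_dzbar:
  assumes "finite T" "n + j \<notin> T"
  shows "(\<alpha> \<and>\<^sub>w dzbar n j) (insert (n + j) T) = wsign T {n + j} * \<alpha> T"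
proof -
  have complement: "insert (n + j) T - S = {n + j} \<longleftrightarrow> S = T" if "S \<subseteq> insert (n + j) T" for S
  proof
    assume rest: "insert (n + j) T - S = {n + j}"
    then have "n + j \<notin> S" by (metis Diff_iff singletonI)
    moreover have "T \<subseteq> S" using rest assms(2) by (metis Diff_iff insertI2 singletonD subsetI)
    ultimately show "S = T" using that by blast
  qed (use assms(2) in blast)
  have "(\<alpha> \<and>\<^sub>w dzbar n j) (insert (n + j) T)
      = (\<Sum>S\<in>Pow (insert (n + j) T). if S = T then wsign T {n + j} * \<alpha> T else 0)"
    unfolding wedge_def
  proof (rule sum.cong[OF refl])
    fix S assume "S \<in> Pow (insert (n + j) T)"
    then show "wsign S (insert (n + j) T - S) * \<alpha> S * dzbar n j (insert (n + j) T - S)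
        = (if S = T then wsign T {n + j} * \<alpha> T else 0)"
      using complement[of S] assms(2) by (cases "S = T") (simp_all add: dzbar_def)
  qed
  also have "\<dots> = wsign T {n + j} * \<alpha> T" using assms(1) by (simp add: subset_insertI)
  finally show ?thesis .
qed

section \<open>Local primitives and gluing\<close>

lemma bideg_primitive_degree:
  assumes "k < n" "pair n k \<subseteq> T"
  shows "bideg n (p - 1) (q - 2) (T - pair n k) \<longleftrightarrow> bideg n p (q - 1) T"
  using bideg_minus_pair[OF assms, of p "q - 1"] by simp

definition local_primitives :: "nat \<Rightarrow> form \<Rightarrow> (nat \<Rightarrow> form) \<Rightarrow> bool" where
  "local_primitives n \<alpha> E \<longleftrightarrow>
     (\<forall>j<n. \<forall>T. finite T \<and> pair n j \<inter> T = {} \<longrightarrow> \<alpha> T = \<i> * lef n {..<n} (E j) T)"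

lemma local_primitivesD:
  "local_primitives n \<alpha> E \<Longrightarrow> j < n \<Longrightarrow> finite T \<Longrightarrow> pair n j \<inter> T = {}
    \<Longrightarrow> \<alpha> T = \<i> * lef n {..<n} (E j) T"
  unfolding local_primitives_def by blast

(* Step 1: if alpha /\ dzbar_j = omega /\ beta, then the contraction of beta by dzbar_j is a
   local primitive of alpha at j. *)
lemma contraction_is_local_primitive:
  assumes "j < n" and wedge_eq: "\<alpha> \<and>\<^sub>w dzbar n j = omega n \<and>\<^sub>w \<beta>"
    and T: "finite T" "pair n j \<inter> T = {}"
  shows "\<alpha> T = \<i> * lef n {..<n} (\<lambda>R. wsign R {n + j} * \<beta> (insert (n + j) R)) T"
proof -
  let ?U = "insert (n + j) T"
  let ?E = "\<lambda>R. wsign R {n + j} * \<beta> (insert (n + j) R)"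
  have nj: "n + j \<notin> T" using T(2) by (auto simp: pair_def)
  have same_pairs: "{k\<in>{..<n}. pair n k \<subseteq> ?U} = {k\<in>{..<n}. pair n k \<subseteq> T}"
    using T(2) by (auto simp: pair_def)
  have pair_term: "wsign T {n + j} * lef_term n \<beta> k ?U = lef_term n ?E k T"
    if k: "k < n" "pair n k \<subseteq> T" for k
  proof -
    have "?U - pair n k = (T - pair n k) \<union> {n + j}" using k T(2) by (auto simp: pair_def)
    moreover have "wsign (pair n k) ((T - pair n k) \<union> {n + j})
        = wsign (pair n k) (T - pair n k) * wsign (pair n k) {n + j}"
      by (rule wsign_Un_right) (use nj in auto)
    moreover have "wsign ((T - pair n k) \<union> pair n k) {n + j}
        = wsign (T - pair n k) {n + j} * wsign (pair n k) {n + j}"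
      by (rule wsign_Un_left) (use T(1) in auto)
    moreover have "(T - pair n k) \<union> pair n k = T" using k(2) by auto
    ultimately have "wsign T {n + j} * lef_term n \<beta> k ?U
        = (wsign (pair n k) {n + j} * wsign (pair n k) {n + j}) * lef_term n ?E k T"
      by (simp add: lef_term_def mult_ac)
    then show ?thesis by (simp add: wsign_squared)
  qed
  have "wsign T {n + j} * \<alpha> T = \<i> * lef n {..<n} \<beta> ?U"
    using wedge_dzbar[OF T(1) nj, of \<alpha>] wedge_omega[of ?U n \<beta>] wedge_eq T(1) by simp
  then have "\<alpha> T = wsign T {n + j} * (\<i> * lef n {..<n} \<beta> ?U)"
    by (metis mult.assoc mult_1 wsign_squared)
  also have "\<dots> = \<i> * (\<Sum>k\<in>{k\<in>{..<n}. pair n k \<subseteq> T}. wsign T {n + j} * lef_term n \<beta> k ?U)"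
    unfolding lef_def same_pairs by (simp add: sum_distrib_left mult.left_commute)
  also have "\<dots> = \<i> * lef n {..<n} ?E T"
    unfolding lef_def by (simp add: pair_term)
  finally show ?thesis .
qed

(* On the block of the coordinates other than j and k, the Lefschetz operator kills the
   (p-1, q-2)-part of the difference of the local primitives at j and k, since both are
   primitives of alpha there. *)
lemma lef_kills_primitive_difference:
  assumes loc: "local_primitives n \<alpha> E" and jk: "j < n" "k < n"
    and M: "finite M" "M \<subseteq> {..<n}" "j \<notin> M" "k \<notin> M" and T: "T \<subseteq> pair_block n M"
  shows "lef n M (\<lambda>S. if bideg n (p - 1) (q - 2) S then E j S - E k S else 0) T = 0"
    (is "lef n M ?h T = 0")
proof (cases "bideg n p (q - 1) T")
  case True
  have fin: "finite T" using T finite_pair_block[OF M(1)] finite_subset by blast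
  have "pair n j \<inter> T = {}" "pair n k \<inter> T = {}"
    using T pair_block_disjoint[OF jk(1) M(2,3)] pair_block_disjoint[OF jk(2) M(2,4)] by blast+
  then have "\<alpha> T = \<i> * lef n M (E j) T" "\<alpha> T = \<i> * lef n M (E k) T"
    using local_primitivesD[OF loc jk(1) fin] local_primitivesD[OF loc jk(2) fin]
      lef_restrict_block[OF M(2) T] by simp_all
  moreover have "lef n M ?h T = lef n M (\<lambda>S. E j S - E k S) T"
  proof (rule lef_cong)
    fix l assume "l \<in> M" "pair n l \<subseteq> T"
    moreover from this have "l < n" using M(2) by blast
    ultimately have "bideg n (p - 1) (q - 2) (T - pair n l)"
      using True by (simp add: bideg_primitive_degree)
    then show "?h (T - pair n l) = E j (T - pair n l) - E k (T - pair n l)" by simp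
  qed
  ultimately show ?thesis by (simp add: lef_diff)
next
  case False
  have "lef n M ?h T = lef n M (\<lambda>_. 0) T"
  proof (rule lef_cong)
    fix l assume "l \<in> M" "pair n l \<subseteq> T"
    moreover from this have "l < n" using M(2) by blast
    ultimately have "\<not> bideg n (p - 1) (q - 2) (T - pair n l)"
      using False by (simp add: bideg_primitive_degree)
    then show "?h (T - pair n l) = 0" by simp
  qed
  then show ?thesis by (simp add: lef_def lef_term_def)
qed

(* Their
   difference h, restricted to that bidegree, is killed by the Lefschetz operator of the
   remaining n - 2 pairs and has degree p + q - 3 < n - 2, so it vanishes. *)
lemma local_primitives_agree:
  assumes loc: "local_primitives n \<alpha> E" and dim: "p + q \<le> int n"
    and jk: "j < n" "k < n" "j \<noteq> k"
    and R: "bideg n (p - 1) (q - 2) R" "pair n j \<inter> R = {}" "pair n k \<inter> R = {}"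
  shows "E j R = E k R"
proof -
  define M where "M = {..<n} - {j, k}"
  define h where "h S = (if bideg n (p - 1) (q - 2) S then E j S - E k S else 0)" for S
  have M: "finite M" "M \<subseteq> {..<n}" "j \<notin> M" "k \<notin> M" unfolding M_def by auto
  have "card M = n - 2" using jk unfolding M_def by (simp add: card_Diff_subset)
  moreover have "2 \<le> n" using jk by (cases "j < k") auto
  ultimately have card_M: "int (card M) = int n - 2" by linarith
  have lef_zero: "\<forall>T \<subseteq> pair_block n M. lef n M h T = 0"
    unfolding h_def using lef_kills_primitive_difference[OF loc jk(1,2) M] by blast
  have low_degree: "\<forall>S \<subseteq> pair_block n M. h S \<noteq> 0 \<longrightarrow> card S < card M"
  proof (intro allI impI)
    fix S assume "h S \<noteq> 0"
    then have "bideg n (p - 1) (q - 2) S" by (simp add: h_def split: if_splits)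
    then have "int (card S) = p - 1 + (q - 2)" by (rule card_bideg)
    then show "card S < card M" using dim card_M by linarith
  qed
  have "R \<subseteq> pair_block n M"
    unfolding M_def using R by (intro subset_block_avoiding) (auto simp: bideg_def)
  then have "h R = 0" using lef_injective_below_middle[OF M(1,2) lef_zero low_degree] by blast
  then show ?thesis using R(1) by (simp add: h_def)
qed

(* Step 3: gluing. gamma R := E_j R for the least pair j missing from R is well defined by
   step 2, and alpha = omega /\ gamma because every (p, q-1)-monomial misses some pair. *)
lemma primitive_from_local_primitives:
  assumes \<alpha>: "\<alpha> \<in> V n p (q - 1)" and dim: "p + q \<le> int n" and loc: "local_primitives n \<alpha> E"
  shows "\<exists>\<gamma>\<in>V n (p - 1) (q - 2). \<alpha> = omega n \<and>\<^sub>w \<gamma>"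
proof -
  define free where "free S = (LEAST j. j < n \<and> pair n j \<inter> S = {})" for S
  define \<gamma> where "\<gamma> S = (if bideg n (p - 1) (q - 2) S then E (free S) S else 0)" for S
  have "\<alpha> U = (omega n \<and>\<^sub>w \<gamma>) U" for U
  proof (cases "bideg n p (q - 1) U")
    case True
    then have U: "finite U" "U \<subseteq> {..<2*n}" "card U < n"
      using card_bideg[OF True] dim by (auto simp: bideg_def intro: finite_subset)
    then obtain j where j: "j < n" "pair n j \<inter> U = {}" using exists_free_pair by blast
    have "lef n {..<n} (E j) U = lef n {..<n} \<gamma> U"
    proof (rule lef_cong)
      fix k assume k: "k \<in> {..<n}" "pair n k \<subseteq> U"
      let ?R = "U - pair n k"
      have R: "bideg n (p - 1) (q - 2) ?R" using k True by (simp add: bideg_primitive_degree)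
      have "free ?R < n \<and> pair n (free ?R) \<inter> ?R = {}"
        unfolding free_def by (rule LeastI[of _ j]) (use j in auto)
      then show "E j ?R = \<gamma> ?R"
        using local_primitives_agree[OF loc dim j(1)] R j by (cases "j = free ?R") (auto simp: \<gamma>_def)
    qed
    then show ?thesis using local_primitivesD[OF loc j(1) U(1) j(2)] by (simp add: wedge_omega[OF U(1)])
  next
    case False
    then have "\<alpha> U = 0" using \<alpha> by (auto simp: V_iff_bideg)
    moreover have "(omega n \<and>\<^sub>w \<gamma>) U = 0"
    proof (cases "finite U")
      case True
      have "lef n {..<n} \<gamma> U = lef n {..<n} (\<lambda>_. 0) U"
        using False by (intro lef_cong) (auto simp: \<gamma>_def bideg_primitive_degree)
      then show ?thesis by (simp add: wedge_omega[OF True] lef_def lef_term_def)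
    qed (simp add: wedge_def)
    ultimately show ?thesis by simp
  qed
  moreover have "\<gamma> \<in> V n (p - 1) (q - 2)" by (simp add: V_iff_bideg \<gamma>_def)
  ultimately show ?thesis by blast
qed

theorem lemma2p4:
  fixes n :: nat and p q :: int and \<alpha> :: form
  assumes "q \<ge> 2" and "p + q \<le> int n"
    and "\<alpha> \<in> V n p (q - 1)"
    and "\<forall>\<phi>\<in>V n 0 1. \<exists>\<beta>\<in>V n (p - 1) (q - 1). \<alpha> \<and>\<^sub>w \<phi> = omega n \<and>\<^sub>w \<beta>"
  shows "\<exists>\<gamma>\<in>V n (p - 1) (q - 2). \<alpha> = omega n \<and>\<^sub>w \<gamma>"
proof -
  have "\<forall>j. \<exists>\<beta>. j < n \<longrightarrow> \<alpha> \<and>\<^sub>w dzbar n j = omega n \<and>\<^sub>w \<beta>"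
    using assms(4) dzbar_in_V by blast
  then obtain \<beta> where \<beta>: "\<And>j. j < n \<Longrightarrow> \<alpha> \<and>\<^sub>w dzbar n j = omega n \<and>\<^sub>w \<beta> j"
    by metis
  have "local_primitives n \<alpha> (\<lambda>j R. wsign R {n + j} * \<beta> j (insert (n + j) R))"
    unfolding local_primitives_def using contraction_is_local_primitive[OF _ \<beta>] by blast
  then show ?thesis using primitive_from_local_primitives assms(2,3) by blast
qed

end
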